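(* Let $k$ and $N$ be positive integers. The inequality $$k^N \leqslant \binom{Nk-N-1}{N}$$ holds in each of the following cases: (1) $k \geqslant 5$ and $N \geqslant 3$; (2) $k \geqslant 4$ and $N \geqslant 4$; (3) $k \geqslant 3$ and $N \geqslant 9$. *)

theory Defs
  imports Main
begin

end

theory Submission
  imports Defs
begin

text \<open>
  Write \<open>k = c + 1\<close>, so that the claim reads \<open>(c + 1)^N \<le> C(cN - 1, N)\<close>.
  Since \<open>C(a, N) / a^N\<close> increases with \<open>a\<close>, raising \<open>c\<close> by one (which raises the top entry
  from \<open>b = cN - 1\<close> to \<open>b + N\<close>) multiplies the right-hand side by at least
  \<open>((b + N) / b)^N \<ge> ((c + 2) / (c + 1))^N\<close>, so the inequality propagates upwards in \<open>c\<close>.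
  For fixed \<open>c\<close>, passing from \<open>N\<close> to \<open>N + 1\<close> multiplies \<open>C(cN - 1, N)\<close> by at least
  \<open>c^c N / ((c - 1)^(c-1) (N + 1))\<close>: one absorption step contributes \<open>cN / (N + 1)\<close> and each
  of the remaining \<open>c - 1\<close> increments of the top entry a factor \<open>\<ge> c / (c - 1)\<close>. Once this
  exceeds \<open>c + 1\<close>, the inequality propagates upwards in \<open>N\<close>, and the three cases reduce to
  \<open>5^3 \<le> C(11, 3)\<close>, \<open>4^4 \<le> C(11, 4)\<close> and \<open>3^9 \<le> C(17, 9)\<close>.
\<close>

lemma binomial_Suc_right_mult: "(n choose Suc k) * Suc k = (n choose k) * (n - k)"
  using times_binomial_minus1_eq[of "Suc k" n] binomial_absorb_comp[of n k]
  by (simp add: mult.commute)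

lemma binomial_mult_power_mono:
  fixes a b n :: nat
  assumes "b \<le> a"
  shows "(b choose n) * a ^ n \<le> (a choose n) * b ^ n"
proof (induction n)
  case 0
  then show ?case by simp
next
  case (Suc n)
  have factor: "a * (b - n) \<le> b * (a - n)"
    using assms by (simp add: diff_mult_distrib2 mult.commute diff_le_mono2)
  have "(b choose Suc n) * Suc n * a ^ Suc n = ((b choose n) * a ^ n) * (a * (b - n))"
    unfolding binomial_Suc_right_mult by (simp add: ac_simps)
  also have "\<dots> \<le> ((a choose n) * b ^ n) * (b * (a - n))"
    using Suc.IH factor by (rule mult_mono) simp_all
  also have "\<dots> = (a choose Suc n) * Suc n * b ^ Suc n"
    unfolding binomial_Suc_right_mult by (simp add: ac_simps)
  finally have "Suc n * ((b choose Suc n) * a ^ Suc n) \<le> Suc n * ((a choose Suc n) * b ^ Suc n)"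
    by (simp only: ac_simps)
  then show ?case by (rule mult_le_cancel1[THEN iffD1, rule_format]) simp
qed

lemma power_le_binomial_step:
  fixes k b N :: nat
  assumes "0 < k" and "k ^ N \<le> b choose N" and "b \<le> N * k"
  shows "(k + 1) ^ N \<le> (b + N) choose N"
proof -
  have "0 < b choose N" using assms(1,2) by (metis le_zero_eq not_gr_zero power_not_zero)
  then have "N \<le> b" by (metis binomial_eq_0 not_le less_irrefl)
  then have "0 < b ^ N" by (cases "N = 0") simp_all
  have "(k + 1) ^ N * b ^ N = ((k + 1) * b) ^ N" by (rule power_mult_distrib[symmetric])
  also have "\<dots> \<le> (k * (b + N)) ^ N"
    using assms(3) by (intro power_mono) (simp_all add: algebra_simps)
  also have "\<dots> = k ^ N * (b + N) ^ N" by (rule power_mult_distrib)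
  also have "\<dots> \<le> (b choose N) * (b + N) ^ N" using assms(2) by simp
  also have "\<dots> \<le> ((b + N) choose N) * b ^ N" by (rule binomial_mult_power_mono) simp
  finally show ?thesis using \<open>0 < b ^ N\<close> mult_le_cancel2 by blast
qed

lemma power_le_binomial_mono:
  fixes c0 c N :: nat
  assumes "0 < c0" and "c0 \<le> c" and "(c0 + 1) ^ N \<le> (c0 * N - 1) choose N"
  shows "(c + 1) ^ N \<le> (c * N - 1) choose N"
  using assms(2)
proof (induction c rule: dec_induct)
  case base
  show ?case by (fact assms(3))
next
  case (step c)
  have "(c + 1 + 1) ^ N \<le> (c * N - 1 + N) choose N"
    by (rule power_le_binomial_step[OF _ step.IH]) (simp_all add: algebra_simps)
  moreover have "c * N - 1 + N = Suc c * N - 1"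
    using assms(1) step.hyps(1) by (cases N) simp_all
  ultimately show ?case by simp
qed

lemma binomial_mult_le_Suc:
  fixes c m N :: nat
  assumes "m < c * N"
  shows "c * (m choose N) \<le> (c - 1) * (Suc m choose N)"
proof -
  have factor: "c * (Suc m - N) \<le> (c - 1) * Suc m"
    using assms by (simp add: diff_mult_distrib diff_mult_distrib2)
  have "Suc m * (c * (m choose N)) = c * (Suc m - N) * (Suc m choose N)"
    by (metis binomial_absorb_comp diff_Suc_1 mult.assoc mult.left_commute)
  also have "\<dots> \<le> (c - 1) * Suc m * (Suc m choose N)"
    using factor by (rule mult_le_mono1)
  also have "\<dots> = Suc m * ((c - 1) * (Suc m choose N))"
    by (simp only: ac_simps)
  finally show ?thesis
    by (rule mult_le_cancel1[THEN iffD1, rule_format]) simp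
qed

lemma binomial_mult_power_le_add:
  fixes c m j N :: nat
  assumes "m + j \<le> c * N"
  shows "c ^ j * (m choose N) \<le> (c - 1) ^ j * ((m + j) choose N)"
  using assms
proof (induction j)
  case 0
  then show ?case by simp
next
  case (Suc j)
  have "c ^ Suc j * (m choose N) \<le> c * ((c - 1) ^ j * ((m + j) choose N))"
    using Suc by simp
  also have "\<dots> = (c - 1) ^ j * (c * ((m + j) choose N))"
    by (simp add: ac_simps)
  also have "\<dots> \<le> (c - 1) ^ j * ((c - 1) * (Suc (m + j) choose N))"
    using binomial_mult_le_Suc[of "m + j" c N] Suc.prems by simp
  finally show ?case by (simp add: ac_simps)
qed

lemma binomial_diagonal_growth:
  fixes c N :: nat
  assumes "0 < c"
  shows "c ^ c * N * ((c * N - 1) choose N)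
    \<le> (c - 1) ^ (c - 1) * Suc N * ((c * Suc N - 1) choose Suc N)"
proof (cases "N = 0")
  case True
  then show ?thesis by simp
next
  case False
  then have cN: "Suc (c * N - 1) = c * N" using assms by simp
  have absorb: "c * N * ((c * N - 1) choose N) = Suc N * (c * N choose Suc N)"
    using Suc_times_binomial[of N "c * N - 1"] unfolding cN by simp
  have "c ^ (c - 1) * (c * N choose Suc N)
      \<le> (c - 1) ^ (c - 1) * ((c * N + (c - 1)) choose Suc N)"
    using assms by (intro binomial_mult_power_le_add) simp
  also have "c * N + (c - 1) = c * Suc N - 1"
    using assms by simp
  finally have shift: "c ^ (c - 1) * (c * N choose Suc N)
      \<le> (c - 1) ^ (c - 1) * ((c * Suc N - 1) choose Suc N)" .
  have "c ^ c = c ^ (c - 1) * c"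
    using assms by (metis Suc_diff_1 power_Suc2)
  then have "c ^ c * N * ((c * N - 1) choose N) = c ^ (c - 1) * (c * N * ((c * N - 1) choose N))"
    by (simp add: ac_simps)
  also have "\<dots> = c ^ (c - 1) * (Suc N * (c * N choose Suc N))"
    by (simp only: absorb)
  also have "\<dots> \<le> (c - 1) ^ (c - 1) * Suc N * ((c * Suc N - 1) choose Suc N)"
    using mult_le_mono2[OF shift, of "Suc N"] by (simp only: ac_simps)
  finally show ?thesis .
qed

lemma mult_Suc_le_mult_mono:
  fixes A B n0 n :: nat
  assumes "A * Suc n0 \<le> B * n0" and "n0 \<le> n"
  shows "A * Suc n \<le> B * n"
proof -
  have "A \<le> B"
  proof (cases "n0 = 0")
    case True
    then show ?thesis using assms(1) by simp
  next
    case False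
    have "A * n0 \<le> B * n0" using assms(1) by (rule order_trans[rotated]) simp
    then show ?thesis using False by simp
  qed
  obtain d where n: "n = n0 + d" using le_Suc_ex[OF assms(2)] by blast
  have "A * Suc n = A * Suc n0 + A * d" by (simp add: n algebra_simps)
  also have "\<dots> \<le> B * n0 + B * d" using assms(1) \<open>A \<le> B\<close> by (intro add_mono) simp_all
  also have "\<dots> = B * n" by (simp add: n algebra_simps)
  finally show ?thesis .
qed

lemma power_le_binomial_diagonal:
  fixes c N0 N :: nat
  assumes "2 \<le> c" and "N0 \<le> N"
    and base: "(c + 1) ^ N0 \<le> (c * N0 - 1) choose N0"
    and ratio: "(c + 1) * (c - 1) ^ (c - 1) * Suc N0 \<le> c ^ c * N0"
  shows "(c + 1) ^ N \<le> (c * N - 1) choose N"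
  using assms(2)
proof (induction N rule: dec_induct)
  case base
  show ?case by (fact assms(3))
next
  case (step n)
  have ratio_n: "(c + 1) * (c - 1) ^ (c - 1) * Suc n \<le> c ^ c * n"
    using ratio step.hyps(1) by (rule mult_Suc_le_mult_mono)
  have "(c + 1) ^ Suc n * ((c - 1) ^ (c - 1) * Suc n) \<le> (c + 1) ^ n * (c ^ c * n)"
    using mult_le_mono1[OF ratio_n, of "(c + 1) ^ n"] by (simp only: ac_simps power_Suc)
  also have "\<dots> \<le> c ^ c * n * ((c * n - 1) choose n)"
    using step.IH by (simp add: ac_simps)
  also have "\<dots> \<le> (c - 1) ^ (c - 1) * Suc n * ((c * Suc n - 1) choose Suc n)"
    using assms(1) by (intro binomial_diagonal_growth) simp
  finally have "(c + 1) ^ Suc n * ((c - 1) ^ (c - 1) * Suc n)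
      \<le> ((c * Suc n - 1) choose Suc n) * ((c - 1) ^ (c - 1) * Suc n)"
    by (simp only: ac_simps)
  moreover have "0 < (c - 1) ^ (c - 1) * Suc n"
    using assms(1) by simp
  ultimately show ?case
    using mult_le_cancel2 by blast
qed

theorem lemma4p4:
  fixes k N :: nat
  assumes "k > 0" and "N > 0"
    and "(k \<ge> 5 \<and> N \<ge> 3) \<or> (k \<ge> 4 \<and> N \<ge> 4) \<or> (k \<ge> 3 \<and> N \<ge> 9)"
  shows "k ^ N \<le> (N * k - N - 1) choose N"
proof -
  obtain c where k: "k = c + 1"
    using assms(1) by (metis Suc_eq_plus1 gr0_implies_Suc)
  have "(c + 1) ^ N \<le> (c * N - 1) choose N"
    using assms(3) unfolding k
  proof (elim disjE conjE)
    assume "5 \<le> c + 1" and "3 \<le> N"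
    then show ?thesis
      by (intro power_le_binomial_mono[of 4 c N] power_le_binomial_diagonal[of 4 3 N])
        (simp_all add: binomial_fact' fact_numeral)
  next
    assume "4 \<le> c + 1" and "4 \<le> N"
    then show ?thesis
      by (intro power_le_binomial_mono[of 3 c N] power_le_binomial_diagonal[of 3 4 N])
        (simp_all add: binomial_fact' fact_numeral)
  next
    assume "3 \<le> c + 1" and "9 \<le> N"
    then show ?thesis
      by (intro power_le_binomial_mono[of 2 c N] power_le_binomial_diagonal[of 2 9 N])
        (simp_all add: binomial_fact' fact_numeral)
  qed
  moreover have "N * k - N - 1 = c * N - 1"
    by (simp add: k algebra_simps)
  ultimately show ?thesis
    by (simp only: k)
qed

end
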